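(* Let $N\ge 2$, let $T_N$ be the homogeneous tree in which every vertex has degree $N$, and fix a root $o$. Let $m>1$ and $(p,q)\in G_2=\{(p,q)\in\mathbb R^2: q\ge m\}$. Then for every $\epsilon>0$ there exists a weight $\mu$ on $T_N$ such that $$W_o(n)\asymp n^{m}(\ln n)^{m-1+\epsilon}\quad\text{for } n\ge 2,$$ and the inequality $\Delta_m u+u^p|\nabla u|^q\le 0$ on $T_N$ admits a nontrivial positive solution.
   Context: A weight on a graph $(V,E)$ is a symmetric function $\mu:V\times V\to[0,\infty)$ with $\mu_{xy}=\mu_{yx}>0$ if and only if $x\sim y$ (adjacent); $\mu(x)=\sum_{y\sim x}\mu_{xy}$. For $m>1$, $\Delta_m u(x)=\frac{1}{\mu(x)}\sum_{y\sim x}\mu_{xy}|u(y)-u(x)|^{m-2}(u(y)-u(x))$ and $|\nabla u(x)|=\big(\sum_{y\sim x}\frac{\mu_{xy}}{2\mu(x)}(u(y)-u(x))^2\big)^{1/2}$. $d$ is the graph distance, $B(o,n)=\{x: d(o,x)\le n\}$, $W_o(n)=\sum_{x\in B(o,n),\,y\in V,\,d(o,x)<d(o,y)}\mu_{xy}$. $f(n)\asymp g(n)$ for $n\ge2$ means there are constants $c,C>0$ with $c\,g(n)\le f(n)\le C\,g(n)$ for all $n\ge 2$. A nontrivial positive solution is a non-constant $u:V\to(0,\infty)$ with $\Delta_m u(x)+u(x)^p|\nabla u(x)|^q\le0$ for all $x\in V$. *)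

theory Defs
  imports Complex_Main
begin

text \<open>Vertices are words (lists of naturals) describing the path from a base vertex []:
the first letter is < N, every later letter is < N - 1. Two words are adjacent
iff one is obtained from the other by appending a single letter.\<close>

definition tree_verts :: "nat \<Rightarrow> nat list set" where
  "tree_verts N = {xs. (xs = [] \<or> hd xs < N) \<and> (\<forall>a\<in>set (tl xs). a < N - 1)}"

definition tree_adj :: "nat \<Rightarrow> nat list \<Rightarrow> nat list \<Rightarrow> bool" where
  "tree_adj N x y \<longleftrightarrow> x \<in> tree_verts N \<and> y \<in> tree_verts N \<and>
     ((\<exists>a. y = x @ [a]) \<or> (\<exists>a. x = y @ [a]))"

definition tree_dist :: "nat \<Rightarrow> nat list \<Rightarrow> nat list \<Rightarrow> nat" where
  "tree_dist N x y = (LEAST n. (tree_adj N ^^ n) x y)"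

definition nbrs :: "nat \<Rightarrow> nat list \<Rightarrow> nat list set" where
  "nbrs N x = {y. tree_adj N x y}"

definition is_weight :: "nat \<Rightarrow> (nat list \<Rightarrow> nat list \<Rightarrow> real) \<Rightarrow> bool" where
  "is_weight N \<mu> \<longleftrightarrow> (\<forall>x y. \<mu> x y = \<mu> y x \<and> \<mu> x y \<ge> 0 \<and> (\<mu> x y > 0 \<longleftrightarrow> tree_adj N x y))"

definition vmeas :: "nat \<Rightarrow> (nat list \<Rightarrow> nat list \<Rightarrow> real) \<Rightarrow> nat list \<Rightarrow> real" where
  "vmeas N \<mu> x = (\<Sum>y\<in>nbrs N x. \<mu> x y)"

definition m_laplacian :: "nat \<Rightarrow> (nat list \<Rightarrow> nat list \<Rightarrow> real) \<Rightarrow> real \<Rightarrow> (nat list \<Rightarrow> real) \<Rightarrow> nat list \<Rightarrow> real" where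
  "m_laplacian N \<mu> m u x =
     (1 / vmeas N \<mu> x) * (\<Sum>y\<in>nbrs N x. \<mu> x y * \<bar>u y - u x\<bar> powr (m - 2) * (u y - u x))"

definition grad_norm :: "nat \<Rightarrow> (nat list \<Rightarrow> nat list \<Rightarrow> real) \<Rightarrow> (nat list \<Rightarrow> real) \<Rightarrow> nat list \<Rightarrow> real" where
  "grad_norm N \<mu> u x = sqrt (\<Sum>y\<in>nbrs N x. \<mu> x y / (2 * vmeas N \<mu> x) * (u y - u x)\<^sup>2)"

definition W :: "nat \<Rightarrow> (nat list \<Rightarrow> nat list \<Rightarrow> real) \<Rightarrow> nat list \<Rightarrow> nat \<Rightarrow> real" where
  "W N \<mu> r n = (\<Sum>x\<in>{x\<in>tree_verts N. tree_dist N r x \<le> n}.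
       \<Sum>y\<in>{y\<in>nbrs N x. tree_dist N r x < tree_dist N r y}. \<mu> x y)"

definition asymp_equiv2 :: "(nat \<Rightarrow> real) \<Rightarrow> (nat \<Rightarrow> real) \<Rightarrow> bool" where
  "asymp_equiv2 f g \<longleftrightarrow> (\<exists>c C. c > 0 \<and> C > 0 \<and> (\<forall>n\<ge>2. c * g n \<le> f n \<and> f n \<le> C * g n))"

end

theory Submission
  imports Defs "HOL-Library.Sublist" "HOL-Analysis.Analysis"
begin

text \<open>
  The solution is radial, \<open>u x = v (d(o, x))\<close>: \<open>v\<close> starts at 2 and drops by
  \<open>\<delta>_k = \<kappa> / ((k + 3) ln(k + 3)^s)\<close> from distance \<open>k\<close> to \<open>k + 1\<close>, where
  \<open>s = 1 + \<epsilon>/(m - 1) > 1\<close>. These steps are summable, so \<open>1 \<le> u \<le> 2\<close> once \<open>\<kappa>\<close> is small.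
  The weight is radial too: the total weight \<open>E_k\<close> of the edges between distances \<open>k\<close> and
  \<open>k + 1\<close> is chosen so that the flux \<open>E_k \<delta>_k^(m-1)\<close> equals \<open>1 + A (\<delta>_0 + ... + \<delta>_(k-1))\<close>.
  The net flux out of a vertex at distance \<open>k + 1\<close> is then \<open>A \<delta>_k\<close>, i.e.
  \<open>\<Delta>_m u = - A \<delta>_k / (E_k + E_(k+1))\<close>, while \<open>|\<nabla>u| \<le> \<delta>_k \<le> 1\<close> and \<open>q \<ge> m\<close> give
  \<open>u^p |\<nabla>u|^q \<le> 2^|p| \<delta>_k^m\<close>, which the Laplacian absorbs once
  \<open>A \<ge> 2^|p| (E_k + E_(k+1)) \<delta>_k^(m-1)\<close>. Finally
  \<open>E_k \<asymp> \<delta>_k^(1-m) \<asymp> k^(m-1) (ln k)^(m-1+\<epsilon>)\<close>, so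
  \<open>W_o(n) = E_0 + ... + E_n \<asymp> n^m (ln n)^(m-1+\<epsilon>)\<close>.
\<close>

section \<open>Depth in the word model of the tree\<close>

function depth :: "nat list \<Rightarrow> nat list \<Rightarrow> nat" where
  "depth r x = (if prefix x r then length r - length x else Suc (depth r (butlast x)))"
  by auto
termination
  by (relation "Wellfounded.measure (\<lambda>(r, x). length x)") (auto, case_tac x, auto)

declare depth.simps [simp del]

lemma depth_self [simp]: "depth r r = 0"
  by (simp add: depth.simps)

lemma depth_eq_0_iff: "depth r x = 0 \<longleftrightarrow> x = r"
  by (subst depth.simps) (auto simp: prefix_def)

lemma depth_snoc_prefix: "prefix (x @ [a]) r \<Longrightarrow> depth r x = Suc (depth r (x @ [a]))"
proof -
  assume pre: "prefix (x @ [a]) r"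
  then have "prefix x r"
    by (metis prefix_snocD prefix_order.less_imp_le)
  moreover have "length (x @ [a]) \<le> length r"
    using pre prefix_length_le by blast
  ultimately show ?thesis
    using pre by (simp add: depth.simps)
qed

lemma depth_snoc_not_prefix: "\<not> prefix (x @ [a]) r \<Longrightarrow> depth r (x @ [a]) = Suc (depth r x)"
  by (subst depth.simps) simp

lemma length_le_depth: "length x \<le> length r + depth r x"
proof (induction x rule: rev_induct)
  case (snoc a x)
  then show ?case
    by (cases "prefix (x @ [a]) r") (auto dest: prefix_length_le simp: depth_snoc_not_prefix)
qed simp

lemma tree_verts_appendD: "xs @ ys \<in> tree_verts N \<Longrightarrow> xs \<in> tree_verts N"
  by (cases xs) (auto simp: tree_verts_def)

lemma snoc_in_tree_verts_iff:
  "x @ [a] \<in> tree_verts N \<longleftrightarrow> x \<in> tree_verts N \<and> a < (if x = [] then N else N - 1)"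
  by (cases x) (auto simp: tree_verts_def)

lemma tree_verts_prefix: "prefix x y \<Longrightarrow> y \<in> tree_verts N \<Longrightarrow> x \<in> tree_verts N"
  by (auto simp: prefix_def intro: tree_verts_appendD)

lemma tree_verts_letters: "x \<in> tree_verts N \<Longrightarrow> set x \<subseteq> {..<N}"
  by (cases x) (auto simp: tree_verts_def)

lemma tree_adj_sym: "tree_adj N x y = tree_adj N y x"
  by (auto simp: tree_adj_def)

lemma tree_adj_depth: "tree_adj N x y \<Longrightarrow> depth r y = Suc (depth r x) \<or> depth r x = Suc (depth r y)"
  unfolding tree_adj_def by (metis depth_snoc_not_prefix depth_snoc_prefix)

lemma walk_to_prefix: "c @ t \<in> tree_verts N \<Longrightarrow> (tree_adj N ^^ length t) (c @ t) c"
proof (induction t rule: rev_induct)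
  case (snoc a t)
  then have "c @ t \<in> tree_verts N"
    using tree_verts_appendD[of "c @ t" "[a]"] by simp
  moreover have "tree_adj N (c @ t @ [a]) (c @ t)"
    using snoc.prems calculation by (auto simp: tree_adj_def)
  ultimately show ?case
    using relpowp_Suc_I2 snoc.IH by fastforce
qed simp

lemma grad_norm_nonneg: "(\<And>y. 0 \<le> \<mu> x y) \<Longrightarrow> 0 \<le> grad_norm N \<mu> u x"
  unfolding grad_norm_def vmeas_def
  by (intro real_sqrt_ge_zero sum_nonneg mult_nonneg_nonneg divide_nonneg_nonneg) auto

locale rooted_tree =
  fixes N :: nat and r :: "nat list"
  assumes two_le_N: "2 \<le> N" and root_in_tree: "r \<in> tree_verts N"
begin

abbreviation V :: "nat list set" where "V \<equiv> tree_verts N"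

lemma depth_le_walk_length: "(tree_adj N ^^ n) r x \<Longrightarrow> depth r x \<le> n"
proof (induction n arbitrary: x)
  case (Suc n)
  then obtain y where "(tree_adj N ^^ n) r y" "tree_adj N y x"
    by (auto elim: relpowp_Suc_E)
  with Suc.IH[of y] tree_adj_depth[of N y x r] show ?case
    by auto
qed (auto elim!: relpowp_0_E)

lemma walk_of_depth: "x \<in> V \<Longrightarrow> (tree_adj N ^^ depth r x) r x"
proof (induction x rule: rev_induct)
  case Nil
  then show ?case
    using walk_to_prefix[of "[]" r] root_in_tree by (simp add: depth.simps)
next
  case (snoc a x)
  show ?case
  proof (cases "prefix (x @ [a]) r")
    case True
    then obtain t where "r = x @ [a] @ t"
      by (auto simp: prefix_def)
    then show ?thesis
      using walk_to_prefix[of "x @ [a]" t] root_in_tree True by (simp add: depth.simps)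
  next
    case False
    have "x \<in> V"
      using snoc.prems tree_verts_appendD by blast
    moreover have "tree_adj N x (x @ [a])"
      using snoc.prems calculation by (auto simp: tree_adj_def)
    ultimately show ?thesis
      using snoc.IH False by (auto simp: depth_snoc_not_prefix)
  qed
qed

lemma tree_dist_eq_depth: "x \<in> V \<Longrightarrow> tree_dist N r x = depth r x"
  unfolding tree_dist_def
  by (rule Least_equality) (auto intro: walk_of_depth depth_le_walk_length)

lemma in_nbrs_iff: "y \<in> nbrs N x \<longleftrightarrow> tree_adj N x y"
  by (simp add: nbrs_def)

lemma nbrs_in_tree_verts: "y \<in> nbrs N x \<Longrightarrow> y \<in> V"
  by (auto simp: nbrs_def tree_adj_def)

lemma depth_nbr: "y \<in> nbrs N x \<Longrightarrow> depth r y = Suc (depth r x) \<or> depth r x = Suc (depth r y)"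
  by (simp add: in_nbrs_iff tree_adj_depth)

lemma nbrs_eq:
  assumes "x \<in> V"
  shows "nbrs N x = (if x = [] then {} else {butlast x}) \<union> (\<lambda>a. x @ [a]) ` {..< (if x = [] then N else N - 1)}"
proof (intro set_eqI iffI)
  fix y
  assume "y \<in> nbrs N x"
  then have "y \<in> V" and "(\<exists>a. y = x @ [a]) \<or> (\<exists>a. x = y @ [a])"
    by (auto simp: nbrs_def tree_adj_def)
  then show "y \<in> (if x = [] then {} else {butlast x}) \<union> (\<lambda>a. x @ [a]) ` {..< (if x = [] then N else N - 1)}"
    using snoc_in_tree_verts_iff[of x _ N] by (auto simp: image_iff)
next
  fix y
  assume y: "y \<in> (if x = [] then {} else {butlast x}) \<union> (\<lambda>a. x @ [a]) ` {..< (if x = [] then N else N - 1)}"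
  show "y \<in> nbrs N x"
  proof (cases "y \<in> (\<lambda>a. x @ [a]) ` {..< (if x = [] then N else N - 1)}")
    case True
    then show ?thesis
      using assms snoc_in_tree_verts_iff by (auto simp: nbrs_def tree_adj_def)
  next
    case False
    with y have "x = y @ [last x]"
      by (auto split: if_splits)
    moreover from this have "y \<in> V"
      using assms tree_verts_appendD by metis
    ultimately show ?thesis
      using assms unfolding nbrs_def tree_adj_def by blast
  qed
qed

lemma finite_nbrs: "x \<in> V \<Longrightarrow> finite (nbrs N x)"
  by (simp add: nbrs_eq)

lemma card_nbrs: "x \<in> V \<Longrightarrow> card (nbrs N x) = N"
proof (cases "x = []")
  case False
  assume "x \<in> V"
  have "butlast x \<notin> (\<lambda>a. x @ [a]) ` {..<N - 1}"
    using False by (auto dest: arg_cong[where f = length])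
  then have "card ({butlast x} \<union> (\<lambda>a. x @ [a]) ` {..<N - 1}) = N - 1 + 1"
    by (simp add: card_image inj_on_def)
  then show ?thesis
    using False \<open>x \<in> V\<close> two_le_N by (simp add: nbrs_eq)
qed (simp add: nbrs_eq card_image inj_on_def)

definition parent :: "nat list \<Rightarrow> nat list" where
  "parent x = (if prefix x r then x @ [r ! length x] else butlast x)"

lemma parent_in_nbrs_depth:
  assumes "x \<in> V" and "x \<noteq> r"
  shows "parent x \<in> nbrs N x \<and> depth r x = Suc (depth r (parent x))"
proof (cases "prefix x r")
  case True
  then obtain zs where "r = x @ zs"
    by (auto simp: prefix_def)
  with \<open>x \<noteq> r\<close> obtain b t where t: "r = x @ b # t"
    by (cases zs) auto
  have "parent x = x @ [r ! length x]"
    using True by (simp add: parent_def)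
  moreover have "r ! length x = b" and pre: "prefix (x @ [b]) r"
    using t by (simp_all add: nth_append)
  moreover have "x @ [b] \<in> V"
    using pre root_in_tree tree_verts_prefix by blast
  ultimately show ?thesis
    using assms depth_snoc_prefix[OF pre] by (auto simp: nbrs_def tree_adj_def)
next
  case False
  then have x: "x = butlast x @ [last x]"
    by (cases x rule: rev_cases) auto
  then have "butlast x \<in> V"
    using assms tree_verts_appendD by metis
  then have "parent x \<in> nbrs N x"
    using assms x False unfolding parent_def nbrs_def tree_adj_def by auto
  moreover have "depth r x = Suc (depth r (butlast x))"
    using depth_snoc_not_prefix[of "butlast x" "last x"] False x by simp
  ultimately show ?thesis
    using False by (simp add: parent_def)
qed

lemma nbr_closer_eq_parent:
  assumes y: "y \<in> nbrs N x" and closer: "depth r y < depth r x"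
  shows "y = parent x"
proof -
  have "(\<exists>a. y = x @ [a]) \<or> (\<exists>a. x = y @ [a])"
    using y by (auto simp: nbrs_def tree_adj_def)
  then show ?thesis
  proof
    assume "\<exists>a. y = x @ [a]"
    then obtain a where a: "y = x @ [a]" ..
    then have "prefix (x @ [a]) r"
      using closer depth_snoc_not_prefix[of x a] by fastforce
    then have "prefix x r"
      by (metis prefix_snocD prefix_order.less_imp_le)
    moreover obtain t where "r = x @ [a] @ t"
      using \<open>prefix (x @ [a]) r\<close> by (auto simp: prefix_def)
    then have "r ! length x = a"
      by (simp add: nth_append)
    ultimately show ?thesis
      using a by (simp add: parent_def)
  next
    assume "\<exists>a. x = y @ [a]"
    then obtain a where a: "x = y @ [a]" ..
    then have "\<not> prefix x r"
      using closer depth_snoc_prefix[of y a] by auto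
    then show ?thesis
      using a by (simp add: parent_def)
  qed
qed

definition children :: "nat list \<Rightarrow> nat list set" where
  "children x = {y \<in> nbrs N x. depth r x < depth r y}"

lemma children_root: "children r = nbrs N r"
  using depth_nbr[of _ r] by (auto simp: children_def)

lemma children_eq:
  assumes "x \<in> V" and "x \<noteq> r"
  shows "children x = nbrs N x - {parent x}"
proof
  show "children x \<subseteq> nbrs N x - {parent x}"
    using parent_in_nbrs_depth[OF assms] by (auto simp: children_def)
  show "nbrs N x - {parent x} \<subseteq> children x"
    using nbr_closer_eq_parent depth_nbr[of _ x] by (fastforce simp: children_def)
qed

lemma card_children: "x \<in> V \<Longrightarrow> card (children x) = (if x = r then N else N - 1)"
  using children_eq card_nbrs children_root finite_nbrs parent_in_nbrs_depth root_in_tree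
  by (simp add: card_Diff_singleton)

lemma sum_nbrs_root: "(\<Sum>y\<in>nbrs N r. f (depth r y)) = real N * f 1"
proof -
  have "(\<Sum>y\<in>nbrs N r. f (depth r y)) = (\<Sum>y\<in>nbrs N r. f 1)"
    using depth_nbr[of _ r] by (intro sum.cong) auto
  then show ?thesis
    using card_nbrs root_in_tree by simp
qed

lemma sum_nbrs_depth_Suc:
  assumes "x \<in> V" and x: "depth r x = Suc j"
  shows "(\<Sum>y\<in>nbrs N x. f (depth r y)) = f j + real (N - 1) * f (Suc (Suc j))"
proof -
  have "x \<noteq> r"
    using x by auto
  note parent = parent_in_nbrs_depth[OF assms(1) this]
  have "(\<Sum>y\<in>nbrs N x. f (depth r y)) = f (depth r (parent x)) + (\<Sum>y\<in>children x. f (depth r y))"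
    using sum.remove[OF finite_nbrs[OF assms(1)], of "parent x"] parent
      children_eq[OF assms(1) \<open>x \<noteq> r\<close>] by simp
  also have "(\<Sum>y\<in>children x. f (depth r y)) = (\<Sum>y\<in>children x. f (Suc (Suc j)))"
  proof (rule sum.cong)
    show "f (depth r y) = f (Suc (Suc j))" if "y \<in> children x" for y
      using that depth_nbr[of y x] x by (auto simp: children_def)
  qed simp
  finally show ?thesis
    using parent x card_children[OF assms(1)] \<open>x \<noteq> r\<close> by simp
qed

definition sphere :: "nat \<Rightarrow> nat list set" where
  "sphere k = {x \<in> V. depth r x = k}"

lemma finite_ball: "finite {x \<in> V. depth r x \<le> n}"
proof (rule finite_subset)
  have "length x \<le> length r + n" if "depth r x \<le> n" for x
    using length_le_depth[of x r] that by linarith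
  then show "{x \<in> V. depth r x \<le> n} \<subseteq> {xs. set xs \<subseteq> {..<N} \<and> length xs \<le> length r + n}"
    using tree_verts_letters by auto
  show "finite {xs. set xs \<subseteq> {..<N} \<and> length xs \<le> length r + n}"
    by (rule finite_lists_length_le) simp
qed

lemma finite_children: "x \<in> V \<Longrightarrow> finite (children x)"
  using finite_nbrs by (simp add: children_def)

lemma finite_sphere: "finite (sphere k)"
  by (rule finite_subset[OF _ finite_ball[of k]]) (auto simp: sphere_def)

lemma sphere_0: "sphere 0 = {r}"
  using root_in_tree by (auto simp: sphere_def depth_eq_0_iff)

lemma child_iff_parent: "y \<in> children x \<longleftrightarrow> y \<in> V \<and> y \<noteq> r \<and> x = parent y"
proof
  assume y: "y \<in> children x"
  then have "x \<in> nbrs N y" and "depth r x < depth r y"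
    using tree_adj_sym by (auto simp: children_def in_nbrs_iff)
  then show "y \<in> V \<and> y \<noteq> r \<and> x = parent y"
    using y nbrs_in_tree_verts nbr_closer_eq_parent by (auto simp: children_def)
next
  assume "y \<in> V \<and> y \<noteq> r \<and> x = parent y"
  then show "y \<in> children x"
    using parent_in_nbrs_depth[of y] tree_adj_sym by (auto simp: children_def in_nbrs_iff)
qed

lemma sphere_Suc: "sphere (Suc k) = (\<Union>x\<in>sphere k. children x)"
proof -
  have "y \<in> sphere (Suc k) \<longleftrightarrow> y \<in> V \<and> y \<noteq> r \<and> parent y \<in> sphere k" for y
  proof (cases "y \<in> V \<and> y \<noteq> r")
    case True
    then show ?thesis
      using parent_in_nbrs_depth[of y] nbrs_in_tree_verts[of "parent y" y] by (auto simp: sphere_def)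
  qed (auto simp: sphere_def)
  then show ?thesis
    using child_iff_parent by auto
qed

lemma card_sphere_Suc_sum: "card (sphere (Suc k)) = (\<Sum>x\<in>sphere k. card (children x))"
  unfolding sphere_Suc
  by (rule card_UN_disjoint[OF finite_sphere])
    (auto simp: sphere_def finite_children child_iff_parent)

lemma card_sphere_Suc: "card (sphere (Suc k)) = N * (N - 1) ^ k"
proof (induction k)
  case 0
  then show ?case
    using card_sphere_Suc_sum[of 0] card_children root_in_tree by (simp add: sphere_0)
next
  case (Suc k)
  have "card (sphere (Suc (Suc k))) = (\<Sum>x\<in>sphere (Suc k). N - 1)"
    unfolding card_sphere_Suc_sum by (rule sum.cong) (auto simp: sphere_def card_children)
  then show ?case
    using Suc.IH by simp
qed

section \<open>Radial weights and radial functions\<close>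

text \<open>There are \<open>N (N - 1)^k\<close> edges between the spheres of radii \<open>k\<close> and \<open>k + 1\<close>,
  so \<open>E k\<close> is their total weight.\<close>

definition edge_weight :: "(nat \<Rightarrow> real) \<Rightarrow> nat \<Rightarrow> real" where
  "edge_weight E k = E k / (real N * real (N - 1) ^ k)"

definition radial_weight :: "(nat \<Rightarrow> real) \<Rightarrow> nat list \<Rightarrow> nat list \<Rightarrow> real" where
  "radial_weight E x y = (if tree_adj N x y then edge_weight E (min (depth r x) (depth r y)) else 0)"

lemma is_weight_radial_weight: "(\<And>k. 0 < E k) \<Longrightarrow> is_weight N (radial_weight E)"
  using two_le_N tree_adj_sym
  by (auto simp: is_weight_def radial_weight_def edge_weight_def min.commute less_imp_le)

lemma W_radial_weight: "W N (radial_weight E) r n = (\<Sum>k\<le>n. E k)"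
proof -
  have outward: "{y \<in> nbrs N x. tree_dist N r x < tree_dist N r y} = children x" if "x \<in> V" for x
    using that tree_dist_eq_depth nbrs_in_tree_verts by (auto simp: children_def)
  have "(\<Sum>y\<in>children x. radial_weight E x y) = real (card (children x)) * edge_weight E k"
    if "x \<in> sphere k" for x k
    using that by (auto simp: sphere_def children_def radial_weight_def in_nbrs_iff)
  then have "(\<Sum>x\<in>sphere k. \<Sum>y\<in>children x. radial_weight E x y)
      = (\<Sum>x\<in>sphere k. real (card (children x))) * edge_weight E k" for k
    by (simp add: sum_distrib_right)
  moreover have "(\<Sum>x\<in>sphere k. real (card (children x))) = real N * real (N - 1) ^ k" for k
    using card_sphere_Suc_sum[of k] card_sphere_Suc[of k] by (metis of_nat_sum of_nat_mult of_nat_power)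
  ultimately have sphere_sum: "(\<Sum>x\<in>sphere k. \<Sum>y\<in>children x. radial_weight E x y) = E k" for k
    using two_le_N by (simp add: edge_weight_def)
  have "W N (radial_weight E) r n = (\<Sum>x\<in>{x \<in> V. depth r x \<le> n}. \<Sum>y\<in>children x. radial_weight E x y)"
    unfolding W_def using outward tree_dist_eq_depth by (intro sum.cong) auto
  also have "\<dots> = (\<Sum>k\<le>n. \<Sum>x\<in>sphere k. \<Sum>y\<in>children x. radial_weight E x y)"
  proof (induction n)
    case 0
    then show ?case
      by (simp add: sphere_def)
  next
    case (Suc n)
    have "{x \<in> V. depth r x \<le> Suc n} = {x \<in> V. depth r x \<le> n} \<union> sphere (Suc n)"
      by (auto simp: sphere_def)
    moreover have "{x \<in> V. depth r x \<le> n} \<inter> sphere (Suc n) = {}"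
      by (auto simp: sphere_def)
    ultimately show ?case
      using Suc.IH by (simp add: sum.union_disjoint finite_ball finite_sphere)
  qed
  finally show ?thesis
    by (simp add: sphere_sum)
qed

lemma sum_radial_weight_root:
  "(\<Sum>y\<in>nbrs N r. radial_weight E r y * g (depth r y)) = E 0 * g 1"
proof -
  have "(\<Sum>y\<in>nbrs N r. radial_weight E r y * g (depth r y))
      = (\<Sum>y\<in>nbrs N r. edge_weight E 0 * g (depth r y))"
    by (intro sum.cong) (auto simp: radial_weight_def in_nbrs_iff)
  also have "\<dots> = real N * (edge_weight E 0 * g 1)"
    by (rule sum_nbrs_root)
  finally show ?thesis
    using two_le_N by (simp add: edge_weight_def)
qed

lemma sum_radial_weight:
  assumes "x \<in> V" and "depth r x = Suc j"
  shows "(\<Sum>y\<in>nbrs N x. radial_weight E x y * g (depth r y))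
    = (E j * g j + E (Suc j) * g (Suc (Suc j))) / (real N * real (N - 1) ^ j)"
proof -
  have "(\<Sum>y\<in>nbrs N x. radial_weight E x y * g (depth r y))
        = (\<Sum>y\<in>nbrs N x. edge_weight E (min (Suc j) (depth r y)) * g (depth r y))"
    using assms(2) by (intro sum.cong) (auto simp: radial_weight_def in_nbrs_iff)
  also have "\<dots> = edge_weight E j * g j + real (N - 1) * edge_weight E (Suc j) * g (Suc (Suc j))"
    using sum_nbrs_depth_Suc[OF assms, of "\<lambda>i. edge_weight E (min (Suc j) i) * g i"]
    by (simp add: mult.assoc)
  moreover have "edge_weight E j = E j / (real N * real (N - 1) ^ j)"
    by (simp add: edge_weight_def)
  moreover have "real (N - 1) * edge_weight E (Suc j) = E (Suc j) / (real N * real (N - 1) ^ j)"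
    using two_le_N by (simp add: edge_weight_def)
  ultimately show ?thesis
    by (simp add: add_divide_distrib)
qed

lemma vmeas_radial_weight_root: "vmeas N (radial_weight E) r = E 0"
  using sum_radial_weight_root[of E "\<lambda>_. 1"] by (simp add: vmeas_def)

lemma vmeas_radial_weight:
  "x \<in> V \<Longrightarrow> depth r x = Suc j \<Longrightarrow>
    vmeas N (radial_weight E) x = (E j + E (Suc j)) / (real N * real (N - 1) ^ j)"
  using sum_radial_weight[of x j E "\<lambda>_. 1"] by (simp add: vmeas_def)

lemma radial_weight_nonneg: "(\<And>k. 0 \<le> E k) \<Longrightarrow> 0 \<le> radial_weight E x y"
  by (simp add: radial_weight_def edge_weight_def)

lemma m_laplacian_radial_root:
  assumes "E 0 \<noteq> 0"
  shows "m_laplacian N (radial_weight E) m (\<lambda>x. f (depth r x)) r = \<bar>f 1 - f 0\<bar> powr (m - 2) * (f 1 - f 0)"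
proof -
  have "(\<Sum>y\<in>nbrs N r. radial_weight E r y * \<bar>f (depth r y) - f (depth r r)\<bar> powr (m - 2)
          * (f (depth r y) - f (depth r r)))
      = E 0 * (\<bar>f 1 - f 0\<bar> powr (m - 2) * (f 1 - f 0))"
    using sum_radial_weight_root[of E "\<lambda>i. \<bar>f i - f 0\<bar> powr (m - 2) * (f i - f 0)"]
    by (simp add: mult.assoc)
  then show ?thesis
    using assms by (simp add: m_laplacian_def vmeas_radial_weight_root)
qed

lemma m_laplacian_radial:
  assumes "x \<in> V" and "depth r x = Suc j" and "E j + E (Suc j) \<noteq> 0"
  shows "m_laplacian N (radial_weight E) m (\<lambda>x. f (depth r x)) x
    = (E j * (\<bar>f j - f (Suc j)\<bar> powr (m - 2) * (f j - f (Suc j)))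
        + E (Suc j) * (\<bar>f (Suc (Suc j)) - f (Suc j)\<bar> powr (m - 2) * (f (Suc (Suc j)) - f (Suc j))))
      / (E j + E (Suc j))"
proof -
  define c where "c = real N * real (N - 1) ^ j"
  have "c \<noteq> 0"
    using two_le_N by (simp add: c_def)
  have vmeas: "vmeas N (radial_weight E) x = (E j + E (Suc j)) / c"
    using vmeas_radial_weight[OF assms(1,2)] by (simp add: c_def)
  have "(\<Sum>y\<in>nbrs N x. radial_weight E x y * \<bar>f (depth r y) - f (depth r x)\<bar> powr (m - 2)
          * (f (depth r y) - f (depth r x)))
      = (E j * (\<bar>f j - f (Suc j)\<bar> powr (m - 2) * (f j - f (Suc j)))
        + E (Suc j) * (\<bar>f (Suc (Suc j)) - f (Suc j)\<bar> powr (m - 2) * (f (Suc (Suc j)) - f (Suc j)))) / c"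
    using sum_radial_weight[OF assms(1,2), of E "\<lambda>i. \<bar>f i - f (Suc j)\<bar> powr (m - 2) * (f i - f (Suc j))"]
    by (simp add: mult.assoc assms(2) c_def)
  then show ?thesis
    using assms \<open>c \<noteq> 0\<close> by (simp add: m_laplacian_def vmeas)
qed

lemma grad_norm_radial_root:
  assumes "E 0 \<noteq> 0"
  shows "grad_norm N (radial_weight E) (\<lambda>x. f (depth r x)) r = sqrt ((f 1 - f 0)\<^sup>2 / 2)"
proof -
  have "(\<Sum>y\<in>nbrs N r. radial_weight E r y / (2 * E 0) * (f (depth r y) - f (depth r r))\<^sup>2)
      = (\<Sum>y\<in>nbrs N r. radial_weight E r y * (f (depth r y) - f 0)\<^sup>2) / (2 * E 0)"
    by (simp add: sum_divide_distrib)
  also have "\<dots> = (f 1 - f 0)\<^sup>2 / 2"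
    using assms sum_radial_weight_root[of E "\<lambda>i. (f i - f 0)\<^sup>2"] by simp
  finally show ?thesis
    by (simp add: grad_norm_def vmeas_radial_weight_root)
qed

lemma grad_norm_radial:
  assumes "x \<in> V" and "depth r x = Suc j" and "E j + E (Suc j) \<noteq> 0"
  shows "grad_norm N (radial_weight E) (\<lambda>x. f (depth r x)) x
    = sqrt ((E j * (f j - f (Suc j))\<^sup>2 + E (Suc j) * (f (Suc (Suc j)) - f (Suc j))\<^sup>2) / (2 * (E j + E (Suc j))))"
proof -
  define c where "c = real N * real (N - 1) ^ j"
  have "c \<noteq> 0"
    using two_le_N by (simp add: c_def)
  have vmeas: "vmeas N (radial_weight E) x = (E j + E (Suc j)) / c"
    using vmeas_radial_weight[OF assms(1,2)] by (simp add: c_def)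
  have "(\<Sum>y\<in>nbrs N x. radial_weight E x y / (2 * vmeas N (radial_weight E) x) * (f (depth r y) - f (depth r x))\<^sup>2)
      = (\<Sum>y\<in>nbrs N x. radial_weight E x y * (f (depth r y) - f (Suc j))\<^sup>2) / (2 * vmeas N (radial_weight E) x)"
    using assms(2) by (simp add: sum_divide_distrib)
  also have "\<dots> = (E j * (f j - f (Suc j))\<^sup>2 + E (Suc j) * (f (Suc (Suc j)) - f (Suc j))\<^sup>2) / (2 * (E j + E (Suc j)))"
    using sum_radial_weight[OF assms(1,2), of E "\<lambda>i. (f i - f (Suc j))\<^sup>2"] \<open>c \<noteq> 0\<close> assms(3)
    by (simp add: vmeas c_def)
  finally show ?thesis
    by (simp add: grad_norm_def)
qed

end

section \<open>Bertrand series and sums of powers of logarithms\<close>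

definition bertrand_term :: "real \<Rightarrow> nat \<Rightarrow> real" where
  "bertrand_term s k = 1 / ((real k + 3) * ln (real k + 3) powr s)"

lemma bertrand_term_pos: "0 < bertrand_term s k"
  by (simp add: bertrand_term_def)

lemma bertrand_term_Suc_le: "0 \<le> s \<Longrightarrow> bertrand_term s (Suc k) \<le> bertrand_term s k"
  unfolding bertrand_term_def
  by (intro divide_left_mono mult_mono powr_mono2) auto

lemma summable_bertrand_term:
  assumes "1 < s"
  shows "summable (bertrand_term s)"
proof -
  have bound: "norm (2 ^ n * bertrand_term s (2 ^ n)) \<le> ln 2 powr (- s) * real n powr (- s)"
    if "1 \<le> n" for n
  proof -
    define x :: real where "x = 2 ^ n + 3"
    have pos: "0 < real n * ln 2"
      using that by simp
    have "real n * ln 2 = ln (2 ^ n :: real)"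
      by (simp add: ln_realpow)
    also have "\<dots> \<le> ln x"
      unfolding x_def by (rule ln_mono) auto
    finally have "real n * ln 2 \<le> ln x" .
    then have "(real n * ln 2) powr s \<le> ln x powr s" and "0 < ln x"
      using pos assms by (auto intro: powr_mono2)
    then have le: "1 / ln x powr s \<le> 1 / (real n * ln 2) powr s"
      using pos that by (intro divide_left_mono mult_pos_pos) auto
    have "2 ^ n * bertrand_term s (2 ^ n) = 2 ^ n / x * (1 / ln x powr s)"
      by (simp add: bertrand_term_def x_def)
    also have "\<dots> \<le> 1 / ln x powr s"
      by (rule mult_left_le_one_le) (simp_all add: x_def divide_le_eq_1 add_pos_pos)
    finally have "2 ^ n * bertrand_term s (2 ^ n) \<le> 1 / (real n * ln 2) powr s"
      using le by linarith
    also have "1 / (real n * ln 2) powr s = ln 2 powr (- s) * real n powr (- s)"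
      unfolding powr_minus_divide powr_mult by simp
    finally show ?thesis
      using bertrand_term_pos[of s "2 ^ n"] by simp
  qed
  have "summable (\<lambda>n. ln 2 powr (- s) * real n powr (- s))"
    using assms by (intro summable_mult) (simp add: summable_real_powr_iff)
  then have "summable (\<lambda>n. 2 ^ n * bertrand_term s (2 ^ n))"
    using bound by (rule summable_comparison_test')
  moreover have "summable (bertrand_term s) \<longleftrightarrow> summable (\<lambda>n. 2 ^ n * bertrand_term s (2 ^ n))"
    using assms bertrand_term_Suc_le bertrand_term_pos
    by (intro condensation_test) (auto intro: less_imp_le)
  ultimately show ?thesis
    by simp
qed

lemma bertrand_term_powr:
  "bertrand_term s k powr (- a) = (real k + 3) powr a * ln (real k + 3) powr (s * a)"
  unfolding bertrand_term_def
  by (simp add: powr_minus_divide powr_divide powr_mult powr_powr)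

lemma powr_ln_mono:
  "0 \<le> a \<Longrightarrow> 0 \<le> b \<Longrightarrow> 1 \<le> x \<Longrightarrow> x \<le> y \<Longrightarrow> x powr a * ln x powr b \<le> y powr a * ln y powr b"
  for x y :: real
  by (intro mult_mono powr_mono2) auto

lemma powr_ln_Suc_le:
  assumes "0 \<le> a" and "0 \<le> b"
  shows "(real (Suc k) + 3) powr a * ln (real (Suc k) + 3) powr b
    \<le> 2 powr (a + b) * ((real k + 3) powr a * ln (real k + 3) powr b)"
proof -
  have "(real k + 4) powr a \<le> (2 * (real k + 3)) powr a"
    using assms by (intro powr_mono2) auto
  also have "\<dots> = 2 powr a * (real k + 3) powr a"
    by (rule powr_mult)
  finally have base: "(real k + 4) powr a \<le> 2 powr a * (real k + 3) powr a" .
  have "real k + 4 \<le> (real k + 3) ^ 2"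
    by (simp add: power2_eq_square algebra_simps)
  then have "ln (real k + 4) \<le> ln ((real k + 3) ^ 2)"
    by simp
  then have "ln (real k + 4) powr b \<le> (2 * ln (real k + 3)) powr b"
    using assms by (intro powr_mono2) (auto simp: ln_realpow)
  also have "\<dots> = 2 powr b * ln (real k + 3) powr b"
    by (rule powr_mult)
  finally have "ln (real k + 4) powr b \<le> 2 powr b * ln (real k + 3) powr b" .
  with base have "(real k + 4) powr a * ln (real k + 4) powr b
      \<le> (2 powr a * (real k + 3) powr a) * (2 powr b * ln (real k + 3) powr b)"
    by (intro mult_mono) auto
  then show ?thesis
    by (simp add: powr_mult powr_add algebra_simps)
qed

lemma sum_powr_ln_upper:
  assumes "0 \<le> a" and "0 \<le> b" and "2 \<le> n"
  shows "(\<Sum>k\<le>n. (real k + 3) powr a * ln (real k + 3) powr b)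
    \<le> 2 * 3 powr (a + b) * (real n powr (a + 1) * ln (real n) powr b)"
proof -
  have n: "2 \<le> real n"
    using assms by simp
  have "3 \<le> real n * real n"
    using mult_mono[OF n n] by simp
  then have "3 * real n \<le> real n ^ 3"
    using n by (simp add: power3_eq_cube mult_right_mono)
  then have "ln (3 * real n) \<le> ln (real n ^ 3)"
    using n by simp
  then have "ln (3 * real n) powr b \<le> (3 * ln (real n)) powr b"
    using n assms by (intro powr_mono2) (auto simp: ln_realpow)
  then have bound: "(3 * real n) powr a * ln (3 * real n) powr b
      \<le> 3 powr (a + b) * (real n powr a * ln (real n) powr b)"
    using n by (auto simp: powr_mult powr_add algebra_simps intro!: mult_left_mono)
  have "(\<Sum>k\<le>n. (real k + 3) powr a * ln (real k + 3) powr b)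
      \<le> (\<Sum>k\<le>n. (3 * real n) powr a * ln (3 * real n) powr b)"
    using n assms by (intro sum_mono powr_ln_mono) auto
  also have "\<dots> = (real n + 1) * ((3 * real n) powr a * ln (3 * real n) powr b)"
    by simp
  also have "\<dots> \<le> (2 * real n) * (3 powr (a + b) * (real n powr a * ln (real n) powr b))"
    using n bound by (intro mult_mono[OF _ bound]) auto
  also have "\<dots> = 2 * 3 powr (a + b) * (real n powr (a + 1) * ln (real n) powr b)"
    using n by (simp add: powr_add algebra_simps)
  finally show ?thesis .
qed

lemma sum_powr_ln_lower:
  assumes "0 \<le> a" and "0 \<le> b" and "2 \<le> n"
  shows "real n powr (a + 1) * ln (real n) powr b / 2 powr (a + 1 + b)
    \<le> (\<Sum>k\<le>n. (real k + 3) powr a * ln (real k + 3) powr b)"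
proof -
  define h where "h = n div 2"
  define Y where "Y = (real n / 2) powr a * (ln (real n) / 2) powr b"
  have n: "2 \<le> real n"
    using assms by simp
  have Y_le: "Y \<le> (real k + 3) powr a * ln (real k + 3) powr b" if "h \<le> k" for k
  proof -
    have "real n \<le> 2 * real h + 1"
      unfolding h_def by linarith
    then have k: "real n / 2 \<le> real k + 3"
      using that by linarith
    have "real n \<le> (real k + 3) * 2"
      using k by simp
    also have "\<dots> \<le> (real k + 3) * (real k + 3)"
      by (intro mult_left_mono) auto
    finally have "real n \<le> (real k + 3) ^ 2"
      by (simp add: power2_eq_square)
    then have "ln (real n) \<le> ln ((real k + 3) ^ 2)"
      using n by simp
    then have "ln (real n) / 2 \<le> ln (real k + 3)"
      by (simp add: ln_realpow)
    then show ?thesis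
      unfolding Y_def using n k assms by (intro mult_mono powr_mono2) auto
  qed
  have card: "real n / 2 \<le> real (card {h..n})"
    by (simp add: h_def of_nat_diff)
  have "real n powr (a + 1) * ln (real n) powr b / 2 powr (a + 1 + b) = real n / 2 * Y"
    using n by (simp add: Y_def powr_divide powr_add ac_simps)
  also have "\<dots> \<le> real (card {h..n}) * Y"
    using card by (rule mult_right_mono) (simp add: Y_def)
  also have "\<dots> = (\<Sum>k\<in>{h..n}. Y)"
    by simp
  also have "\<dots> \<le> (\<Sum>k\<in>{h..n}. (real k + 3) powr a * ln (real k + 3) powr b)"
    using Y_le by (intro sum_mono) auto
  also have "\<dots> \<le> (\<Sum>k\<le>n. (real k + 3) powr a * ln (real k + 3) powr b)"
    by (intro sum_mono2) auto
  finally show ?thesis .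
qed

lemma asymp_equiv2_sum_powr_ln:
  assumes "0 \<le> a" and "0 \<le> b"
  shows "asymp_equiv2 (\<lambda>n. \<Sum>k\<le>n. (real k + 3) powr a * ln (real k + 3) powr b)
    (\<lambda>n. real n powr (a + 1) * ln (real n) powr b)"
  unfolding asymp_equiv2_def
proof (intro exI conjI allI impI)
  fix n :: nat
  assume "2 \<le> n"
  then show "1 / 2 powr (a + 1 + b) * (real n powr (a + 1) * ln (real n) powr b)
      \<le> (\<Sum>k\<le>n. (real k + 3) powr a * ln (real k + 3) powr b)"
    and "(\<Sum>k\<le>n. (real k + 3) powr a * ln (real k + 3) powr b)
      \<le> 2 * 3 powr (a + b) * (real n powr (a + 1) * ln (real n) powr b)"
    using sum_powr_ln_lower[OF assms] sum_powr_ln_upper[OF assms] by simp_all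
qed simp_all

lemma asymp_equiv2_bounded_ratio:
  assumes "asymp_equiv2 f g" and "0 < c" and "0 < C"
    and "\<And>n. c * f n \<le> h n" and "\<And>n. h n \<le> C * f n"
  shows "asymp_equiv2 h g"
proof -
  obtain c' C' where "0 < c'" "0 < C'" and f: "\<And>n. 2 \<le> n \<Longrightarrow> c' * g n \<le> f n \<and> f n \<le> C' * g n"
    using assms(1) unfolding asymp_equiv2_def by blast
  have "(c * c') * g n \<le> h n \<and> h n \<le> (C * C') * g n" if "2 \<le> n" for n
  proof
    have "c * (c' * g n) \<le> c * f n"
      using f[OF that] assms(2) by (intro mult_left_mono) auto
    then show "(c * c') * g n \<le> h n"
      using assms(4)[of n] by (simp add: mult.assoc)
    have "C * f n \<le> C * (C' * g n)"
      using f[OF that] assms(3) by (intro mult_left_mono) auto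
    then show "h n \<le> (C * C') * g n"
      using assms(5)[of n] by (simp add: mult.assoc)
  qed
  then show ?thesis
    unfolding asymp_equiv2_def using \<open>0 < c'\<close> \<open>0 < C'\<close> assms(2,3) by (meson mult_pos_pos)
qed

section \<open>The radial supersolution\<close>

lemma mult_powr_le_mult_powr:
  fixes c P G X m q :: real
  assumes "0 \<le> c" and "c \<le> P" and "0 \<le> G" and "G \<le> X" and "X \<le> 1" and "0 \<le> m" and "m \<le> q"
  shows "c * G powr q \<le> P * X powr m"
proof -
  have "G powr q \<le> X powr q"
    using assms by (intro powr_mono2) auto
  also have "\<dots> \<le> X powr m"
    using assms by (intro powr_mono') auto
  finally show ?thesis
    using assms by (intro mult_mono) auto
qed

lemma abs_powr_minus_two_mult: "0 < d \<Longrightarrow> \<bar>d\<bar> powr (m - 2) * d = d powr (m - 1)"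
  for d m :: real
  using powr_add[of d "m - 2" 1] by simp

lemma powr_le_two_powr_abs: "1 \<le> x \<Longrightarrow> x \<le> 2 \<Longrightarrow> x powr p \<le> 2 powr \<bar>p\<bar>"
  for x p :: real
proof (cases "0 \<le> p")
  case True
  assume "1 \<le> x" "x \<le> 2"
  then show ?thesis
    using True by (simp add: powr_mono2)
next
  case False
  assume "1 \<le> x"
  then have "x powr p \<le> x powr 0"
    using False by (intro powr_mono) auto
  also have "\<dots> \<le> 2 powr \<bar>p\<bar>"
    using \<open>1 \<le> x\<close> by (simp add: ge_one_powr_ge_zero)
  finally show ?thesis .
qed

locale radial_supersolution = rooted_tree N r for N r +
  fixes m \<epsilon> p q :: real
  assumes one_lt_m: "1 < m" and m_le_q: "m \<le> q" and eps_pos: "0 < \<epsilon>"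
begin

definition "s = 1 + \<epsilon> / (m - 1)"
definition "P = 2 powr \<bar>p\<bar>"
definition "R = 2 powr ((m - 1) + (m - 1 + \<epsilon>))"
definition "A = P * (2 + 2 * R)"
definition "\<kappa> = 1 / (A * suminf (bertrand_term s))"
definition "\<delta> k = \<kappa> * bertrand_term s k"
definition "profile k = 2 - (\<Sum>j<k. \<delta> j)"
definition "flux k = 1 + A * (\<Sum>j<k. \<delta> j)"
definition "E k = flux k / \<delta> k powr (m - 1)"
definition "\<phi> k = (real k + 3) powr (m - 1) * ln (real k + 3) powr (m - 1 + \<epsilon>)"
definition "u x = profile (depth r x)"

lemma one_lt_s: "1 < s"
  using one_lt_m eps_pos by (simp add: s_def)

lemma P_ge_1: "1 \<le> P"
  by (simp add: P_def ge_one_powr_ge_zero)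

lemma R_pos: "0 < R"
  by (simp add: R_def)

lemma P_le_A: "P \<le> A"
  using P_ge_1 R_pos by (simp add: A_def)

lemma A_ge_1: "1 \<le> A"
  using P_ge_1 P_le_A by linarith

lemma suminf_bertrand_term_pos: "0 < suminf (bertrand_term s)"
  using summable_bertrand_term[OF one_lt_s] bertrand_term_pos by (rule suminf_pos)

lemma kappa_pos: "0 < \<kappa>"
  using suminf_bertrand_term_pos A_ge_1 by (simp add: \<kappa>_def)

lemma delta_pos: "0 < \<delta> k"
  using kappa_pos bertrand_term_pos by (simp add: \<delta>_def)

lemma delta_Suc_le: "\<delta> (Suc k) \<le> \<delta> k"
  using kappa_pos one_lt_s bertrand_term_Suc_le by (simp add: \<delta>_def)

lemma sum_delta_le: "(\<Sum>j<k. \<delta> j) \<le> 1 / A"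
proof -
  have "(\<Sum>j<k. \<delta> j) = \<kappa> * (\<Sum>j<k. bertrand_term s j)"
    by (simp add: \<delta>_def sum_distrib_left)
  also have "\<dots> \<le> \<kappa> * suminf (bertrand_term s)"
    using summable_bertrand_term[OF one_lt_s] bertrand_term_pos kappa_pos
    by (intro mult_left_mono sum_le_suminf) (auto intro: less_imp_le)
  also have "\<dots> = 1 / A"
    using suminf_bertrand_term_pos by (simp add: \<kappa>_def)
  finally show ?thesis .
qed

lemma sum_delta_nonneg: "0 \<le> (\<Sum>j<k. \<delta> j)"
  using delta_pos by (simp add: sum_nonneg less_imp_le)

lemma delta_le: "\<delta> k \<le> 1 / A"
  using sum_delta_le[of "Suc k"] sum_delta_nonneg[of k] by simp

lemma P_delta_le_1: "P * \<delta> k \<le> 1"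
proof -
  have "P * \<delta> k \<le> P * (1 / A)"
    using delta_le P_ge_1 by (intro mult_left_mono) auto
  also have "\<dots> \<le> 1"
    using P_le_A A_ge_1 by simp
  finally show ?thesis .
qed

lemma delta_le_1: "\<delta> k \<le> 1"
proof -
  have "\<delta> k \<le> P * \<delta> k"
    using mult_right_mono[OF P_ge_1 less_imp_le[OF delta_pos[of k]]] by simp
  then show ?thesis
    using P_delta_le_1[of k] by linarith
qed

lemma profile_Suc: "profile (Suc k) = profile k - \<delta> k"
  by (simp add: profile_def)

lemma flux_Suc: "flux (Suc k) = flux k + A * \<delta> k"
  by (simp add: flux_def algebra_simps)

lemma profile_bounds: "1 \<le> profile k" "profile k \<le> 2"
proof -
  have "1 / A \<le> 1"
    using A_ge_1 by simp
  then show "1 \<le> profile k" "profile k \<le> 2"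
    using sum_delta_le[of k] sum_delta_nonneg[of k] by (simp_all add: profile_def)
qed

lemma flux_bounds: "1 \<le> flux k" "flux k \<le> 2"
proof -
  have "A * (\<Sum>j<k. \<delta> j) \<le> A * (1 / A)"
    using sum_delta_le A_ge_1 by (intro mult_left_mono) auto
  then show "1 \<le> flux k" "flux k \<le> 2"
    using sum_delta_nonneg[of k] A_ge_1 by (simp_all add: flux_def)
qed

lemma delta_powr: "\<delta> k powr (1 - m) = \<kappa> powr (1 - m) * \<phi> k"
proof -
  have "s * (m - 1) = m - 1 + \<epsilon>"
    using one_lt_m by (simp add: s_def field_simps)
  then have "bertrand_term s k powr (1 - m) = \<phi> k"
    using bertrand_term_powr[of s k "m - 1"] by (simp add: \<phi>_def)
  then show ?thesis
    using kappa_pos bertrand_term_pos by (simp add: \<delta>_def powr_mult)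
qed

lemma phi_pos: "0 < \<phi> k"
  by (simp add: \<phi>_def)

lemma E_eq: "E k = flux k * (\<kappa> powr (1 - m) * \<phi> k)"
proof -
  have "\<delta> k powr (1 - m) = inverse (\<delta> k powr (m - 1))"
    using powr_minus[of "\<delta> k" "m - 1"] by simp
  then show ?thesis
    by (simp add: E_def delta_powr divide_inverse)
qed

lemma E_pos: "0 < E k"
  using flux_bounds(1)[of k] kappa_pos phi_pos by (simp add: E_eq)

lemma E_flux: "E k * \<delta> k powr (m - 1) = flux k"
  using delta_pos[of k] by (simp add: E_def)

lemma E_Suc_flux_le: "E (Suc k) * \<delta> k powr (m - 1) \<le> 2 * R"
proof -
  have "\<delta> k powr (m - 1) * \<delta> k powr (1 - m) = 1"
    using delta_pos[of k] by (simp add: powr_add[symmetric])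
  then have "\<delta> k powr (m - 1) * (\<kappa> powr (1 - m) * \<phi> k) = 1"
    by (simp add: delta_powr)
  then have "E (Suc k) * \<delta> k powr (m - 1) = flux (Suc k) * (\<phi> (Suc k) / \<phi> k)"
    using phi_pos[of k] by (simp add: E_eq field_simps)
  also have "\<dots> \<le> 2 * R"
  proof (rule mult_mono)
    have "\<phi> (Suc k) \<le> R * \<phi> k"
      using powr_ln_Suc_le[of "m - 1" "m - 1 + \<epsilon>" k] one_lt_m eps_pos
      by (simp add: \<phi>_def R_def)
    then show "\<phi> (Suc k) / \<phi> k \<le> R"
      using phi_pos[of k] by (simp add: divide_le_eq)
  qed (use flux_bounds phi_pos in \<open>auto simp: less_imp_le zero_le_divide_iff\<close>)
  finally show ?thesis .
qed

lemma u_radial: "u = (\<lambda>x. profile (depth r x))"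
  by (simp add: u_def fun_eq_iff)

lemma u_powr_le: "u x powr p \<le> P"
  using profile_bounds powr_le_two_powr_abs by (simp add: u_def P_def)

lemma m_laplacian_u_root: "m_laplacian N (radial_weight E) m u r = - (\<delta> 0 powr (m - 1))"
  using m_laplacian_radial_root[of E m profile] E_pos[of 0] abs_powr_minus_two_mult[OF delta_pos, of 0 m]
  by (simp add: u_radial profile_Suc)

lemma grad_norm_u_root: "grad_norm N (radial_weight E) u r \<le> \<delta> 0"
proof -
  have "grad_norm N (radial_weight E) u r = sqrt ((\<delta> 0)\<^sup>2 / 2)"
    using grad_norm_radial_root[of E profile] E_pos[of 0] by (simp add: u_radial profile_Suc)
  also have "\<dots> \<le> sqrt ((\<delta> 0)\<^sup>2)"
    by (rule real_sqrt_le_mono) simp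
  finally show ?thesis
    using delta_pos[of 0] by simp
qed

lemma m_laplacian_u:
  assumes "x \<in> V" and "depth r x = Suc j"
  shows "m_laplacian N (radial_weight E) m u x = - (A * \<delta> j / (E j + E (Suc j)))"
proof -
  have "E j * (\<bar>\<delta> j\<bar> powr (m - 2) * \<delta> j) + E (Suc j) * (\<bar>- \<delta> (Suc j)\<bar> powr (m - 2) * - \<delta> (Suc j))
      = E j * \<delta> j powr (m - 1) - E (Suc j) * \<delta> (Suc j) powr (m - 1)"
    using abs_powr_minus_two_mult[OF delta_pos] by simp
  also have "\<dots> = - (A * \<delta> j)"
    by (simp add: E_flux flux_Suc)
  finally show ?thesis
    using m_laplacian_radial[OF assms, of E m profile] E_pos[of j] E_pos[of "Suc j"]
    by (simp add: u_radial profile_Suc)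
qed

lemma grad_norm_u:
  assumes "x \<in> V" and "depth r x = Suc j"
  shows "grad_norm N (radial_weight E) u x \<le> \<delta> j"
proof -
  define D where "D = E j + E (Suc j)"
  have D: "0 < D"
    using E_pos by (simp add: D_def add_pos_pos)
  have "(\<delta> (Suc j))\<^sup>2 \<le> (\<delta> j)\<^sup>2"
    using delta_Suc_le delta_pos by (intro power_mono) (auto intro: less_imp_le)
  then have "E j * (\<delta> j)\<^sup>2 + E (Suc j) * (\<delta> (Suc j))\<^sup>2 \<le> D * (\<delta> j)\<^sup>2"
    using mult_left_mono[of "(\<delta> (Suc j))\<^sup>2" "(\<delta> j)\<^sup>2" "E (Suc j)"] E_pos[of "Suc j"]
    by (simp add: D_def distrib_right)
  also have "\<dots> \<le> (\<delta> j)\<^sup>2 * (2 * D)"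
    using D by simp
  finally have "(E j * (\<delta> j)\<^sup>2 + E (Suc j) * (\<delta> (Suc j))\<^sup>2) / (2 * D) \<le> (\<delta> j)\<^sup>2"
    using D by (simp add: pos_divide_le_eq)
  then have "sqrt ((E j * (\<delta> j)\<^sup>2 + E (Suc j) * (\<delta> (Suc j))\<^sup>2) / (2 * D)) \<le> sqrt ((\<delta> j)\<^sup>2)"
    by (rule real_sqrt_le_mono)
  moreover have "grad_norm N (radial_weight E) u x
      = sqrt ((E j * (\<delta> j)\<^sup>2 + E (Suc j) * (\<delta> (Suc j))\<^sup>2) / (2 * D))"
    using grad_norm_radial[OF assms, of E profile] D by (simp add: u_radial profile_Suc D_def)
  ultimately show ?thesis
    using delta_pos[of j] by simp
qed

lemma supersolution_root:
  "m_laplacian N (radial_weight E) m u r + u r powr p * grad_norm N (radial_weight E) u r powr q \<le> 0"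
proof -
  have "u r powr p * grad_norm N (radial_weight E) u r powr q \<le> P * \<delta> 0 powr m"
    using u_powr_le grad_norm_u_root delta_le_1 one_lt_m m_le_q
    by (intro mult_powr_le_mult_powr grad_norm_nonneg radial_weight_nonneg) (auto intro: less_imp_le E_pos)
  also have "\<dots> = (P * \<delta> 0) * \<delta> 0 powr (m - 1)"
    using delta_pos[of 0] powr_add[of "\<delta> 0" 1 "m - 1"] by simp
  also have "\<dots> \<le> 1 * \<delta> 0 powr (m - 1)"
    using P_delta_le_1 by (rule mult_right_mono) simp
  finally show ?thesis
    by (simp add: m_laplacian_u_root)
qed

lemma supersolution_depth_Suc:
  assumes "x \<in> V" and "depth r x = Suc j"
  shows "m_laplacian N (radial_weight E) m u x + u x powr p * grad_norm N (radial_weight E) u x powr q \<le> 0"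
proof -
  define D where "D = E j + E (Suc j)"
  have D: "0 < D"
    using E_pos by (simp add: D_def add_pos_pos)
  have "u x powr p * grad_norm N (radial_weight E) u x powr q \<le> P * \<delta> j powr m"
    using u_powr_le grad_norm_u[OF assms] delta_le_1 one_lt_m m_le_q
    by (intro mult_powr_le_mult_powr grad_norm_nonneg radial_weight_nonneg) (auto intro: less_imp_le E_pos)
  also have "\<dots> = P * (\<delta> j powr (m - 1) * D) * \<delta> j / D"
    using delta_pos[of j] powr_add[of "\<delta> j" "m - 1" 1] D by simp
  also have "\<dots> \<le> A * \<delta> j / D"
  proof -
    have "\<delta> j powr (m - 1) * D = flux j + E (Suc j) * \<delta> j powr (m - 1)"
      using E_flux[of j] by (simp add: D_def algebra_simps)
    also have "\<dots> \<le> 2 + 2 * R"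
      using flux_bounds(2) E_Suc_flux_le by (intro add_mono)
    finally have "P * (\<delta> j powr (m - 1) * D) \<le> A"
      using P_ge_1 by (simp add: A_def mult_left_mono)
    then show ?thesis
      using delta_pos[of j] D by (intro divide_right_mono mult_right_mono) auto
  qed
  finally show ?thesis
    using m_laplacian_u[OF assms] by (simp add: D_def)
qed

lemma supersolution: "x \<in> V \<Longrightarrow>
  m_laplacian N (radial_weight E) m u x + u x powr p * grad_norm N (radial_weight E) u x powr q \<le> 0"
  using supersolution_root supersolution_depth_Suc by (cases "depth r x") (auto simp: depth_eq_0_iff)

lemma W_asymp:
  "asymp_equiv2 (W N (radial_weight E) r) (\<lambda>n. real n powr m * ln (real n) powr (m - 1 + \<epsilon>))"
proof (rule asymp_equiv2_bounded_ratio)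
  show "asymp_equiv2 (\<lambda>n. \<Sum>k\<le>n. \<phi> k) (\<lambda>n. real n powr m * ln (real n) powr (m - 1 + \<epsilon>))"
    using asymp_equiv2_sum_powr_ln[of "m - 1" "m - 1 + \<epsilon>"] one_lt_m eps_pos by (simp add: \<phi>_def)
  show "0 < \<kappa> powr (1 - m)" and "0 < 2 * \<kappa> powr (1 - m)"
    using kappa_pos by simp_all
  fix n
  have "\<kappa> powr (1 - m) * \<phi> k \<le> E k" and "E k \<le> 2 * \<kappa> powr (1 - m) * \<phi> k" for k
  proof -
    have "0 \<le> \<kappa> powr (1 - m) * \<phi> k"
      using phi_pos[of k] by simp
    then show "\<kappa> powr (1 - m) * \<phi> k \<le> E k" and "E k \<le> 2 * \<kappa> powr (1 - m) * \<phi> k"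
      using mult_right_mono[OF flux_bounds(1)] mult_right_mono[OF flux_bounds(2)]
      by (simp_all add: E_eq mult.assoc)
  qed
  then show "\<kappa> powr (1 - m) * (\<Sum>k\<le>n. \<phi> k) \<le> W N (radial_weight E) r n"
    and "W N (radial_weight E) r n \<le> 2 * \<kappa> powr (1 - m) * (\<Sum>k\<le>n. \<phi> k)"
    by (simp_all add: W_radial_weight sum_distrib_left sum_mono)
qed

lemma u_nonconstant: "\<exists>y\<in>V. u y \<noteq> u r"
proof -
  have "nbrs N r \<noteq> {}"
    using card_nbrs[OF root_in_tree] two_le_N by auto
  then obtain y where y: "y \<in> nbrs N r"
    by blast
  then have "depth r y = 1"
    using depth_nbr[of y r] by simp
  then have "u y = u r - \<delta> 0"
    by (simp add: u_def profile_Suc)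
  then show ?thesis
    using y nbrs_in_tree_verts delta_pos[of 0] by force
qed

lemma u_pos: "0 < u x"
  using profile_bounds(1)[of "depth r x"] by (simp add: u_def)

end

theorem mainTheorem9:
  fixes N :: nat and r :: "nat list" and m p q \<epsilon> :: real
  assumes "N \<ge> 2" and "r \<in> tree_verts N" and "m > 1" and "q \<ge> m" and "\<epsilon> > 0"
  shows "\<exists>\<mu>. is_weight N \<mu> \<and>
           asymp_equiv2 (W N \<mu> r) (\<lambda>n. real n powr m * ln (real n) powr (m - 1 + \<epsilon>)) \<and>
           (\<exists>u :: nat list \<Rightarrow> real.
               (\<forall>x\<in>tree_verts N. u x > 0) \<and>
               (\<exists>x\<in>tree_verts N. \<exists>y\<in>tree_verts N. u x \<noteq> u y) \<and>
               (\<forall>x\<in>tree_verts N. m_laplacian N \<mu> m u x + u x powr p * grad_norm N \<mu> u x powr q \<le> 0))"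
proof -
  interpret radial_supersolution N r m \<epsilon> p q
    using assms by unfold_locales auto
  have "is_weight N (radial_weight E)"
    using E_pos by (rule is_weight_radial_weight)
  moreover have "\<exists>x\<in>V. \<exists>y\<in>V. u x \<noteq> u y"
    using u_nonconstant root_in_tree by blast
  ultimately show ?thesis
    using W_asymp u_pos supersolution by blast
qed

end
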